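(* Let $f(x)=\sum_{i=0}^{n-1}a_ix^{q^i}\in\mathbb{F}_{q^n}[x]$ and let $A$ be its Dickson matrix. If $A$ is reducible, then $f$ is $\mathbb{F}_{q^d}$-linear for some divisor $d>1$ of $n$.
   Context: The Dickson matrix of $f$ is the $n\times n$ matrix indexed by $\mathbb{Z}_n$ with $A[i|j]=a_{j-i}^{q^i}$ (indices mod $n$). An $n\times n$ matrix $A$ is reducible if there is a partition $\{\alpha,\beta\}$ of $\mathbb{Z}_n$ into nonempty sets with $A[\alpha|\beta]$ the zero matrix ($A[\alpha|\beta]$ = submatrix with rows $\alpha$, columns $\beta$). *)

theory Defs
  imports "HOL-Computational_Algebra.Primes"
begin

text \<open>The field F_{q^n} is modelled by a finite field type 'a with CARD('a) = q^n.
 A q-polynomial f(x) = sum_{i<n} a_i x^{q^i} is given by its coefficient function a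
 (only a 0, ..., a (n-1) are used).\<close>

definition qpoly :: "nat \<Rightarrow> nat \<Rightarrow> (nat \<Rightarrow> 'a::field) \<Rightarrow> 'a \<Rightarrow> 'a" where
  "qpoly q n a x = (\<Sum>i<n. a i * x ^ (q ^ i))"

definition dickson_matrix :: "nat \<Rightarrow> nat \<Rightarrow> (nat \<Rightarrow> 'a::field) \<Rightarrow> nat \<Rightarrow> nat \<Rightarrow> 'a" where
  "dickson_matrix q n a i j = (a (nat ((int j - int i) mod int n))) ^ (q ^ i)"

definition reducible_matrix :: "nat \<Rightarrow> (nat \<Rightarrow> nat \<Rightarrow> 'a::zero) \<Rightarrow> bool" where
  "reducible_matrix n A \<longleftrightarrow>
     (\<exists>\<alpha> \<beta>. \<alpha> \<union> \<beta> = {..<n} \<and> \<alpha> \<inter> \<beta> = {} \<and> \<alpha> \<noteq> {} \<and> \<beta> \<noteq> {} \<and>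
        (\<forall>i\<in>\<alpha>. \<forall>j\<in>\<beta>. A i j = 0))"

definition subfield_qd :: "nat \<Rightarrow> nat \<Rightarrow> 'a::field set" where
  "subfield_qd q d = {c. c ^ (q ^ d) = c}"

definition linear_over :: "'a::field set \<Rightarrow> ('a \<Rightarrow> 'a) \<Rightarrow> bool" where
  "linear_over K f \<longleftrightarrow> (\<forall>x y. f (x + y) = f x + f y) \<and> (\<forall>c\<in>K. \<forall>x. f (c * x) = c * f x)"

end

theory Submission
  imports Defs "HOL-Number_Theory.Residues"
begin

text \<open>If the Dickson matrix has a zero block with row set \<open>\<alpha>\<close>, then the entries
  \<open>A[i|i+s] = a_s^(q^i)\<close> show that \<open>\<alpha>\<close> is closed under translation by every
  \<open>s\<close> with \<open>a_s \<noteq> 0\<close> in \<open>\<int>/n\<close>, hence under translation by the gcd \<open>d\<close> of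
  \<open>n\<close> and all such \<open>s\<close>. A proper nonempty subset of \<open>\<int>/n\<close> is not closed under
  translation by 1, so \<open>d > 1\<close>. Only monomials \<open>x^(q^i)\<close> with \<open>d | i\<close> occur in
  \<open>f\<close>, and \<open>c^(q^i) = c\<close> for \<open>c \<in> \<bbbF>_(q^d)\<close> and \<open>d | i\<close>, so \<open>f\<close> is
  \<open>\<bbbF>_(q^d)\<close>-linear.\<close>

definition shift_closed :: "nat \<Rightarrow> nat set \<Rightarrow> nat \<Rightarrow> bool" where
  "shift_closed n A s \<longleftrightarrow> (\<forall>x\<in>A. (x + s) mod n \<in> A)"

lemma shift_closed_0: "A \<subseteq> {..<n} \<Longrightarrow> shift_closed n A 0"
  unfolding shift_closed_def by auto

lemma shift_closed_self: "A \<subseteq> {..<n} \<Longrightarrow> shift_closed n A n"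
  unfolding shift_closed_def by auto

lemma shift_closed_add:
  assumes "shift_closed n A s" and "shift_closed n A t"
  shows "shift_closed n A (s + t)"
  unfolding shift_closed_def
proof
  fix x assume "x \<in> A"
  then have "((x + s) mod n + t) mod n \<in> A"
    using assms unfolding shift_closed_def by blast
  then show "(x + (s + t)) mod n \<in> A"
    by (simp add: mod_add_left_eq add.assoc)
qed

lemma shift_closed_mult:
  "A \<subseteq> {..<n} \<Longrightarrow> shift_closed n A s \<Longrightarrow> shift_closed n A (k * s)"
  by (induction k) (auto simp: shift_closed_0 intro: shift_closed_add)

lemma shift_closed_add_multiple_cancel:
  "shift_closed n A (s + n * k) \<Longrightarrow> shift_closed n A s"
  unfolding shift_closed_def by (metis add.assoc mod_mult_self1 mult.commute)

lemma shift_closed_gcd: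
  assumes A: "A \<subseteq> {..<n}" and n: "n \<ge> 1"
    and s: "shift_closed n A s" and t: "shift_closed n A t"
  shows "shift_closed n A (gcd s t)"
proof (cases "s = 0")
  case True
  then show ?thesis using t by simp
next
  case False
  then obtain x y where xy: "s * x = t * y + gcd s t"
    using bezout_nat by blast
  \<comment> \<open>Subtraction of \<open>y * t\<close> is realised by adding \<open>(n - 1) * y * t\<close>.\<close>
  have "shift_closed n A (x * s + (n - 1) * y * t)"
    using shift_closed_add[OF shift_closed_mult[OF A s] shift_closed_mult[OF A t]] .
  moreover have "x * s + (n - 1) * y * t = gcd s t + n * (t * y)"
  proof -
    have "x * s + (n - 1) * y * t = gcd s t + (1 + (n - 1)) * (t * y)"
      using xy by (simp add: algebra_simps)
    then show ?thesis using n by simp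
  qed
  ultimately show ?thesis
    using shift_closed_add_multiple_cancel by metis
qed

lemma shift_closed_Gcd:
  assumes "A \<subseteq> {..<n}" and "n \<ge> 1" and "finite S" and "\<forall>s\<in>S. shift_closed n A s"
  shows "shift_closed n A (Gcd (insert n S))"
  using assms(3,4)
proof (induction S rule: finite_induct)
  case empty
  then show ?case using shift_closed_self[OF assms(1)] by simp
next
  case (insert s S)
  have "Gcd (insert n (insert s S)) = gcd s (Gcd (insert n S))"
    by (metis Gcd_insert gcd.left_commute insert_commute)
  then show ?case
    using shift_closed_gcd[OF assms(1,2)] insert by simp
qed

lemma shift_closed_1_imp_full:
  assumes A: "A \<subseteq> {..<n}" and "A \<noteq> {}" and closed: "shift_closed n A 1"
  shows "A = {..<n}"
proof
  show "{..<n} \<subseteq> A"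
  proof
    fix j assume j: "j \<in> {..<n}"
    obtain i where i: "i \<in> A" using \<open>A \<noteq> {}\<close> by blast
    have "shift_closed n A (n - i + j)"
      using shift_closed_mult[OF A closed, of "n - i + j"] by simp
    then have "(i + (n - i + j)) mod n \<in> A"
      using i unfolding shift_closed_def by blast
    moreover have "i + (n - i + j) = j + n"
      using i A by auto
    ultimately show "j \<in> A" using j by simp
  qed
qed (fact A)

lemma dickson_matrix_shift:
  assumes "s < n"
  shows "dickson_matrix q n a i ((i + s) mod n) = a s ^ q ^ i"
proof -
  have "(int ((i + s) mod n) - int i) mod int n = ((int i + int s) - int i) mod int n"
    by (simp add: zmod_int mod_diff_left_eq)
  also have "\<dots> = int s" using assms by simp
  finally show ?thesis unfolding dickson_matrix_def by simp
qed

lemma dickson_zero_block_shift_closed: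
  assumes part: "\<alpha> \<union> \<beta> = {..<n}" "\<alpha> \<inter> \<beta> = {}"
    and zero: "\<forall>i\<in>\<alpha>. \<forall>j\<in>\<beta>. dickson_matrix q n (a :: nat \<Rightarrow> 'a::field) i j = 0"
    and s: "s < n" "a s \<noteq> 0"
  shows "shift_closed n \<alpha> s"
  unfolding shift_closed_def
proof
  fix i assume i: "i \<in> \<alpha>"
  have "dickson_matrix q n a i ((i + s) mod n) \<noteq> 0"
    using s by (simp add: dickson_matrix_shift)
  then have "(i + s) mod n \<notin> \<beta>" using zero i by blast
  moreover have "(i + s) mod n < n" using s by simp
  ultimately show "(i + s) mod n \<in> \<alpha>" using part by blast
qed

lemma reducible_dickson_support_Gcd:
  fixes a :: "nat \<Rightarrow> 'a::field"
  assumes "reducible_matrix n (dickson_matrix q n a)" and n: "n \<ge> 1"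
  shows "Gcd (insert n {s. s < n \<and> a s \<noteq> 0}) > 1"
proof -
  obtain \<alpha> \<beta> where part: "\<alpha> \<union> \<beta> = {..<n}" "\<alpha> \<inter> \<beta> = {}" and "\<alpha> \<noteq> {}" "\<beta> \<noteq> {}"
    and zero: "\<forall>i\<in>\<alpha>. \<forall>j\<in>\<beta>. dickson_matrix q n a i j = 0"
    using assms(1) unfolding reducible_matrix_def by blast
  have A: "\<alpha> \<subseteq> {..<n}" using part by blast
  define d where "d = Gcd (insert n {s. s < n \<and> a s \<noteq> 0})"
  have "shift_closed n \<alpha> d"
    unfolding d_def using dickson_zero_block_shift_closed[OF part zero]
    by (intro shift_closed_Gcd[OF A n]) auto
  then have "d \<noteq> 1"
    using shift_closed_1_imp_full[OF A \<open>\<alpha> \<noteq> {}\<close>] part \<open>\<beta> \<noteq> {}\<close> by auto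
  moreover have "d \<noteq> 0"
    using n unfolding d_def by simp
  ultimately have "d > 1" by simp
  then show ?thesis unfolding d_def .
qed

lemma CHAR_eq_of_card_prime_power:
  assumes "prime p" and "card (UNIV :: 'a::{field,finite} set) = p ^ m"
  shows "CHAR('a) = p"
proof -
  have "CHAR('a) > 0"
    using finite_imp_CHAR_pos[where ?'a='a] by simp
  then have char_prime: "prime CHAR('a)"
    by (rule prime_CHAR_semidom)
  then have "CHAR('a) dvd p"
    using CHAR_dvd_CARD[where ?'a='a] assms(2) prime_dvd_power by metis
  then show ?thesis using assms(1) char_prime by (simp add: primes_dvd_imp_eq)
qed

lemma qpoly_add:
  fixes a :: "nat \<Rightarrow> 'a::field"
  assumes "prime CHAR('a)" and "q = CHAR('a) ^ k"
  shows "qpoly q n a (x + y) = qpoly q n a x + qpoly q n a y"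
proof -
  have "(x + y) ^ q ^ i = x ^ q ^ i + y ^ q ^ i" for i
  proof -
    have "q ^ i = CHAR('a) ^ (k * i)"
      using assms(2) by (simp add: power_mult)
    then show ?thesis by (rule freshmans_dream'[OF assms(1)])
  qed
  then show ?thesis
    unfolding qpoly_def by (simp add: distrib_left sum.distrib)
qed

lemma power_power_mult_fixed:
  fixes c :: "'a::monoid_mult"
  assumes "c ^ q ^ d = c"
  shows "c ^ q ^ (d * m) = c"
proof (induction m)
  case (Suc m)
  have "q ^ (d * Suc m) = q ^ (d * m) * q ^ d"
    by (simp add: power_add)
  then have "c ^ q ^ (d * Suc m) = (c ^ q ^ (d * m)) ^ q ^ d"
    by (metis power_mult)
  then show ?case using Suc assms by simp
qed simp

lemma qpoly_mult_subfield:
  fixes a :: "nat \<Rightarrow> 'a::field"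
  assumes support: "\<And>i. i < n \<Longrightarrow> a i \<noteq> 0 \<Longrightarrow> d dvd i" and c: "c \<in> subfield_qd q d"
  shows "qpoly q n a (c * x) = c * qpoly q n a x"
proof -
  have "a i * (c * x) ^ q ^ i = c * (a i * x ^ q ^ i)" if "i < n" for i
  proof (cases "a i = 0")
    case False
    then obtain m where "i = d * m" using support \<open>i < n\<close> by blast
    then have "c ^ q ^ i = c"
      using c power_power_mult_fixed unfolding subfield_qd_def by blast
    then show ?thesis by (simp add: power_mult_distrib)
  qed simp
  then show ?thesis
    unfolding qpoly_def sum_distrib_left by (intro sum.cong) auto
qed

theorem mainTheorem8:
  fixes q n :: nat and a :: "nat \<Rightarrow> 'a::{field,finite}"
  assumes "\<exists>p k. prime p \<and> k > 0 \<and> q = p ^ k"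
    and "n \<ge> 1"
    and "card (UNIV :: 'a set) = q ^ n"
    and "reducible_matrix n (dickson_matrix q n a)"
  shows "\<exists>d. d dvd n \<and> d > 1 \<and> linear_over (subfield_qd q d) (qpoly q n a)"
proof -
  obtain p k where p: "prime p" and q: "q = p ^ k"
    using assms(1) by blast
  have char: "CHAR('a) = p"
    using CHAR_eq_of_card_prime_power[OF p, where ?'a='a, of "k * n"] assms(3) q
    by (simp add: power_mult)
  define d where "d = Gcd (insert n {s. s < n \<and> a s \<noteq> 0})"
  have d_dvd_support: "d dvd i" if "i < n" "a i \<noteq> 0" for i
    unfolding d_def by (rule Gcd_dvd) (simp add: that)
  have "d dvd n" and "d > 1"
    unfolding d_def using reducible_dickson_support_Gcd[OF assms(4,2)] by simp_all
  moreover have "linear_over (subfield_qd q d) (qpoly q n a)"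
    unfolding linear_over_def
  proof (intro conjI allI ballI)
    show "qpoly q n a (x + y) = qpoly q n a x + qpoly q n a y" for x y
      using p q char by (intro qpoly_add) simp_all
    show "qpoly q n a (c * x) = c * qpoly q n a x" if "c \<in> subfield_qd q d" for c x
      using qpoly_mult_subfield[OF d_dvd_support that] .
  qed
  ultimately show ?thesis by blast
qed

end
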